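(* Suppose we have $2$ agents with additive, normalized valuations, provided with predictions of accuracy $\eta<1-\frac{1-a}{\min\{6a,4\}}$ for some given $a\in(\frac12,1]$, that is, the allowed error between the predictions and the true valuations is $1-\eta>\frac{1-a}{\min\{6a,4\}}$. Then there is no online algorithm that guarantees an $a$-EFX allocation for all instances whose errors are at most $1-\eta$, even when $T'=T=4$ and the predictions and the true valuations are $4$-value functions.
   Context: Online fair division with predictions: agents $N=[n]$; goods $g_1,\dots,g_T$ arrive one per time step. Each agent $i$ has a true additive normalized valuation $v_i$ ($v_i(g_t)\ge0$, $\sum_{t\in[T]}v_i(g_t)=1$, $v_i(S)=\sum_{g\in S}v_i(g)$) and, before any arrival, the algorithm receives a prediction $p_i=(p_i(g_1),\dots,p_i(g_{T'}))$ for each agent (an additive normalized valuation over $T'$ predicted goods) together with the accuracy level. Error $d_i=\frac12\sum_{t=1}^{\max\{T,T'\}}|p_i(g_t)-v_i(g_t)|$ (missing entries set to $0$), accuracy $\eta_i=1-d_i$; accuracy $\eta$ means $d_i\le 1-\eta$ for all $i$. At time $t$ the true values $v_i(g_t)$ are revealed and $g_t$ must be irrevocably allocated. For $S\ne\emptyset$ and valuation $f$, $\bar S^f=S\setminus\{g\}$ with $g\in\arg\max_{g'\in S}f(S\setminus\{g'\})$, $\bar\emptyset^f=\emptyset$. An allocation is $a$-EFX if $v_i(A_i)\ge a\cdot v_i(\bar{A_j}^{v_i})$ for all $i,j$. A function is $k$-value if it takes at most $k$ distinct values. *)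

theory Defs
  imports Complex_Main
begin

(* Agents are 0 ..< n, goods g_1..g_T are indexed 0 ..< T.
   A valuation profile is  v :: nat \<Rightarrow> nat \<Rightarrow> real,  v i t = value of agent i for good t. *)

definition val :: "(nat \<Rightarrow> real) \<Rightarrow> nat set \<Rightarrow> real" where
  "val f S = (\<Sum>g\<in>S. f g)"

definition bar :: "(nat \<Rightarrow> real) \<Rightarrow> nat set \<Rightarrow> nat set" where
  "bar f S = (if S = {} then {}
      else S - {SOME g. g \<in> S \<and> (\<forall>g'\<in>S. val f (S - {g'}) \<le> val f (S - {g}))})"

definition normalized_val :: "nat \<Rightarrow> (nat \<Rightarrow> real) \<Rightarrow> bool" where
  "normalized_val T f \<longleftrightarrow> (\<forall>t<T. 0 \<le> f t) \<and> (\<Sum>t<T. f t) = 1"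

definition k_value :: "nat \<Rightarrow> nat \<Rightarrow> (nat \<Rightarrow> real) \<Rightarrow> bool" where
  "k_value k T f \<longleftrightarrow> card (f ` {..<T}) \<le> k"

definition pred_error :: "nat \<Rightarrow> (nat \<Rightarrow> real) \<Rightarrow> (nat \<Rightarrow> real) \<Rightarrow> real" where
  "pred_error T p v = (1/2) * (\<Sum>t<T. \<bar>p t - v t\<bar>)"

(* agent_bundle of agent i under allocation alloc (good \<Rightarrow> agent) *)
definition agent_bundle :: "nat \<Rightarrow> (nat \<Rightarrow> nat) \<Rightarrow> nat \<Rightarrow> nat set" where
  "agent_bundle T alloc i = {t. t < T \<and> alloc t = i}"

definition a_EFX :: "real \<Rightarrow> nat \<Rightarrow> nat \<Rightarrow> (nat \<Rightarrow> nat \<Rightarrow> real) \<Rightarrow> (nat \<Rightarrow> nat) \<Rightarrow> bool" where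
  "a_EFX a n T v alloc \<longleftrightarrow>
     (\<forall>i<n. \<forall>j<n. val (v i) (agent_bundle T alloc i) \<ge> a * val (v i) (bar (v i) (agent_bundle T alloc j)))"

(* A deterministic online algorithm with predictions for n agents:
   alg p v t is the agent receiving good t; it may depend on the predictions p (all given
   upfront) but only on the true values v i s of goods s \<le> t revealed so far. *)
definition online_alg :: "nat \<Rightarrow> nat \<Rightarrow> ((nat \<Rightarrow> nat \<Rightarrow> real) \<Rightarrow> (nat \<Rightarrow> nat \<Rightarrow> real) \<Rightarrow> nat \<Rightarrow> nat) \<Rightarrow> bool" where
  "online_alg n T alg \<longleftrightarrow>
     (\<forall>p v t. t < T \<longrightarrow> alg p v t < n) \<and>
     (\<forall>p v v' t. (\<forall>i<n. \<forall>s\<le>t. v i s = v' i s) \<longrightarrow> alg p v t = alg p v' t)"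

end

theory Submission
  imports Defs
begin

text \<open>
  Both agents are predicted to value the four goods as \<open>(t, t + e, 1 - 3t - e, t)\<close>.
  The first good is worth \<open>t\<close> to everybody, so the algorithm gives it to some agent, the
  owner, blindly; the owner's true valuation is \<open>(t, t, 1 - 3t, t)\<close>. The second good is
  worth \<open>t + e\<close> to the rival, and depending on whether the algorithm gives it to the
  owner, the rival's last two values are \<open>(1 - 3t - 2e, t + e)\<close> or \<open>(1 - 3t, t - e)\<close>.
  Every profile is at distance \<open>e\<close> from the prediction, and each of the eight ways of
  completing the allocation lets one agent \<open>a\<close>-envy the other's bundle minus one good,
  provided \<open>t, e\<close> satisfy three linear inequalities. These force \<open>e > (1 - a) / (2 + 3a)\<close>
  and can be met with any \<open>e\<close> slightly above that bound, which is at most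
  \<open>(1 - a) / min (6a) 4\<close>.
\<close>

lemma val_diff_le_val_bar:
  assumes "finite S" and "g \<in> S"
  shows "val f S - f g \<le> val f (bar f S)"
proof -
  have remove: "val f (S - {h}) = val f S - f h" if "h \<in> S" for h
    using assms(1) that by (simp add: val_def sum_diff1)
  let ?best = "\<lambda>h. h \<in> S \<and> (\<forall>h'\<in>S. val f (S - {h'}) \<le> val f (S - {h}))"
  obtain h0 where "is_arg_min f (\<lambda>h. h \<in> S) h0"
    using ex_is_arg_min_if_finite assms by blast
  then have "?best h0"
    by (auto simp: is_arg_min_linorder remove)
  then have "?best (SOME h. ?best h)"
    by (rule someI)
  then have "val f (S - {g}) \<le> val f (bar f S)"
    using assms(2) by (auto simp: bar_def)
  then show ?thesis
    using remove[OF assms(2)] by simp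
qed

lemma not_a_EFX_if_envy:
  assumes "i < n" and "j < n" and "0 \<le> a" and "g \<in> agent_bundle T alloc j"
    and "val (v i) (agent_bundle T alloc i) < a * (val (v i) (agent_bundle T alloc j) - v i g)"
  shows "\<not> a_EFX a n T v alloc"
proof -
  have "finite (agent_bundle T alloc j)"
    by (simp add: agent_bundle_def)
  then have "a * (val (v i) (agent_bundle T alloc j) - v i g)
      \<le> a * val (v i) (bar (v i) (agent_bundle T alloc j))"
    using assms(3,4) by (intro mult_left_mono val_diff_le_val_bar)
  then show ?thesis
    using assms(1,2,5) unfolding a_EFX_def by fastforce
qed

lemma mem_agent_bundle: "g \<in> agent_bundle T alloc i \<longleftrightarrow> g < T \<and> alloc g = i"
  by (simp add: agent_bundle_def)

lemma val_agent_bundle: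
  "val f (agent_bundle T alloc i) = (\<Sum>k<T. if alloc k = i then f k else 0)"
  unfolding val_def agent_bundle_def by (simp add: sum.If_cases lessThan_def Collect_conj_eq Int_commute)

lemma adversary_parameters:
  fixes a d :: real
  assumes a: "1/2 < a" "a \<le> 1" and d: "(1 - a) / (2 + 3*a) < d"
  shows "\<exists>t e. 0 < e \<and> e \<le> d \<and> e \<le> t \<and> 3*t + 2*e \<le> 1
     \<and> 2*t < a*(1 - 3*t) \<and> 1 - 3*t - 2*e < 2*a*(t + e) \<and> t + e < a*(1 - 2*t - e)"
proof -
  define D where "D = 2 + 3*a"
  have D: "0 < D" using a by (simp add: D_def)
  have "1 - a < d * D" using d D by (simp add: D_def pos_divide_less_eq)
  txt \<open>At \<open>y = 0\<close> the point \<open>(t, e)\<close> makes the first two strict inequalities tight;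
    a small \<open>y > 0\<close> moves it into the feasible region.\<close>
  define y where "y = min (d * D - (1 - a)) (a - 1/2)"
  have y: "0 < y" "2*y \<le> 2*a - 1" "y \<le> d * D - (1 - a)"
    using a \<open>1 - a < d * D\<close> by (auto simp: y_def min_def)
  define t where "t = (a - y/2) / D"
  define e where "e = (1 - a + y) / D"
  have tD: "t * D = a - y/2" and eD: "e * D = 1 - a + y"
    using D by (simp_all add: t_def e_def)
  have "0 < a" and "a / 2 < a * a" using a by simp_all
  have "0 < e" using D a y by (simp add: e_def)
  moreover have "e \<le> d"
    using y by (simp add: e_def D pos_divide_le_eq)
  moreover have "e \<le> t"
    unfolding e_def t_def using y D by (intro divide_right_mono) auto
  moreover have "3*t + 2*e \<le> 1"
  proof -
    have "(3*t + 2*e) * D \<le> 1 * D"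
      unfolding distrib_right mult.assoc tD eD unfolding D_def using y a by simp
    then show ?thesis using D by simp
  qed
  moreover have "2*t < a*(1 - 3*t)"
  proof -
    have "2*t * D < a*(1 - 3*t) * D"
      unfolding left_diff_distrib right_diff_distrib mult.assoc tD unfolding D_def
      using \<open>0 < a\<close> y by (simp add: algebra_simps add_pos_pos)
    then show ?thesis using D by simp
  qed
  moreover have "1 - 3*t - 2*e < 2*a*(t + e)"
  proof -
    have "(1 - 3*t - 2*e) * D < 2*a*(t + e) * D"
      unfolding left_diff_distrib distrib_right distrib_left mult.assoc tD eD unfolding D_def
      using \<open>0 < a\<close> y by (simp add: algebra_simps add_pos_pos)
    then show ?thesis using D by simp
  qed
  moreover have "t + e < a*(1 - 2*t - e)"
  proof -
    have "(t + e) * D < a*(1 - 2*t - e) * D"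
      unfolding left_diff_distrib right_diff_distrib distrib_right mult.assoc tD eD unfolding D_def
      by (simp add: algebra_simps) (use \<open>a / 2 < a * a\<close> y in linarith)
    then show ?thesis using D by simp
  qed
  ultimately show ?thesis by blast
qed

definition vec4 :: "real \<Rightarrow> real \<Rightarrow> real \<Rightarrow> real \<Rightarrow> nat \<Rightarrow> real" where
  "vec4 x0 x1 x2 x3 k =
     (if k = 0 then x0 else if k = 1 then x1 else if k = 2 then x2 else if k = 3 then x3 else 0)"

lemma sum_lessThan_4: "(\<Sum>k<4::nat. f k) = f 0 + f 1 + f 2 + (f 3 :: 'a :: comm_monoid_add)"
  by (simp add: eval_nat_numeral add.assoc)

lemma normalized_val_vec4:
  "normalized_val 4 (vec4 x0 x1 x2 x3) \<longleftrightarrow>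
     0 \<le> x0 \<and> 0 \<le> x1 \<and> 0 \<le> x2 \<and> 0 \<le> x3 \<and> x0 + x1 + x2 + x3 = 1"
  unfolding normalized_val_def sum_lessThan_4 by (auto simp: vec4_def less_Suc_eq eval_nat_numeral)

lemma pred_error_vec4:
  "pred_error 4 (vec4 p0 p1 p2 p3) (vec4 x0 x1 x2 x3) =
     (\<bar>p0 - x0\<bar> + \<bar>p1 - x1\<bar> + \<bar>p2 - x2\<bar> + \<bar>p3 - x3\<bar>) / 2"
  unfolding pred_error_def sum_lessThan_4 by (simp add: vec4_def)

lemma k_value_of_le: "T \<le> k \<Longrightarrow> k_value k T f"
  unfolding k_value_def using card_image_le[of "{..<T}" f] by simp

definition owner_val :: "real \<Rightarrow> nat \<Rightarrow> real" where
  "owner_val t = vec4 t t (1 - 3*t) t"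

definition rival_val :: "real \<Rightarrow> real \<Rightarrow> bool \<Rightarrow> nat \<Rightarrow> real" where
  "rival_val t e s =
     (if s then vec4 t (t + e) (1 - 3*t - 2*e) (t + e) else vec4 t (t + e) (1 - 3*t) (t - e))"

text \<open>\<open>own\<close> is the agent that receives good 0 and \<open>s\<close> says whether it also receives good 1.
  Good 0 has the same values in every profile and good 1 has values independent of \<open>s\<close>, so the
  adversary can fix \<open>own\<close> and \<open>s\<close> after seeing the algorithm's first two decisions.\<close>

definition adversary_profile :: "real \<Rightarrow> real \<Rightarrow> nat \<Rightarrow> bool \<Rightarrow> nat \<Rightarrow> nat \<Rightarrow> real" where
  "adversary_profile t e own s i = (if i = own then owner_val t else rival_val t e s)"

definition adversary_prediction :: "real \<Rightarrow> real \<Rightarrow> nat \<Rightarrow> real" where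
  "adversary_prediction t e = vec4 t (t + e) (1 - 3*t - e) t"

lemma online_alg_against_adversary:
  assumes "online_alg 2 4 alg"
  obtains own s where "own < 2" and "alg p (adversary_profile t e own s) 0 = own"
    and "alg p (adversary_profile t e own s) 1 = (if s then own else 1 - own)"
proof -
  have range: "alg p' v k < 2" if "k < 4" for p' v k
    using assms that unfolding online_alg_def by blast
  have prefix: "alg p v k = alg p v' k" if "\<forall>i<2. \<forall>k'\<le>k. v i k' = v' i k'" for v v' k
    using assms that unfolding online_alg_def by blast
  define own where "own = alg p (adversary_profile t e 0 True) 0"
  define s where "s = (alg p (adversary_profile t e own True) 1 = own)"
  have "own < 2"
    unfolding own_def by (rule range) simp
  moreover have "alg p (adversary_profile t e own s) 0 = own"
    unfolding own_def by (rule prefix)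
      (simp add: adversary_profile_def owner_val_def rival_val_def vec4_def)
  moreover have "alg p (adversary_profile t e own s) 1 = (if s then own else 1 - own)"
  proof -
    have "alg p (adversary_profile t e own s) 1 = alg p (adversary_profile t e own True) 1"
      by (rule prefix) (simp add: adversary_profile_def rival_val_def vec4_def le_Suc_eq)
    moreover have "alg p (adversary_profile t e own True) 1 < 2"
      by (rule range) simp
    ultimately show ?thesis
      using \<open>own < 2\<close> unfolding s_def by auto
  qed
  ultimately show ?thesis
    by (rule that)
qed

lemma adversary_profile_not_a_EFX_owner_gets_good1:
  assumes own: "own < 2"
    and alloc: "alloc 0 = own" "alloc 1 = own" "alloc 2 < 2" "alloc 3 < 2"
    and "0 < a" and "0 \<le> e" and "3*t + 2*e \<le> 1"
    and ineqs: "2*t < a*(1 - 3*t)" "1 - 3*t - 2*e < 2*a*(t + e)" "t + e < a*(1 - 2*t - e)"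
  shows "\<not> a_EFX a 2 4 (adversary_profile t e own True) alloc"
proof -
  define riv where "riv = 1 - own"
  have riv: "riv < 2" "riv \<noteq> own" "own \<noteq> riv"
    using own by (auto simp: riv_def less_2_cases_iff)
  have "t < 1"
    using \<open>0 \<le> e\<close> \<open>3*t + 2*e \<le> 1\<close> by linarith
  then have "0 < a*(1 - t)"
    using \<open>0 < a\<close> by simp
  note profile_simps = mem_agent_bundle val_agent_bundle sum_lessThan_4 adversary_profile_def
    owner_val_def rival_val_def vec4_def algebra_simps
  note setting = own alloc(1,2) \<open>0 < a\<close> ineqs riv \<open>0 < a*(1 - t)\<close>
  from alloc(3,4) own consider "alloc 2 = own" "alloc 3 = own" | "alloc 2 = own" "alloc 3 = riv"
    | "alloc 2 = riv" "alloc 3 = own" | "alloc 2 = riv" "alloc 3 = riv"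
    unfolding riv_def by linarith
  then show ?thesis
  proof cases
    case 1
    show ?thesis by (rule not_a_EFX_if_envy[where i = riv and j = own and g = 0])
        (use setting 1 in \<open>simp_all add: profile_simps\<close>)
  next
    case 2
    show ?thesis by (rule not_a_EFX_if_envy[where i = riv and j = own and g = 0])
        (use setting 2 in \<open>simp_all add: profile_simps\<close>)
  next
    case 3
    show ?thesis by (rule not_a_EFX_if_envy[where i = riv and j = own and g = 0])
        (use setting 3 in \<open>simp_all add: profile_simps\<close>)
  next
    case 4
    show ?thesis by (rule not_a_EFX_if_envy[where i = own and j = riv and g = 3])
        (use setting 4 in \<open>simp_all add: profile_simps\<close>)
  qed
qed

lemma adversary_profile_not_a_EFX_rival_gets_good1:
  assumes own: "own < 2"
    and alloc: "alloc 0 = own" "alloc 1 = 1 - own" "alloc 2 < 2" "alloc 3 < 2"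
    and "0 < a" and "0 \<le> e" and ineqs: "2*t < a*(1 - 3*t)" "t + e < a*(1 - 2*t - e)"
  shows "\<not> a_EFX a 2 4 (adversary_profile t e own False) alloc"
proof -
  define riv where "riv = 1 - own"
  have riv: "riv < 2" "riv \<noteq> own" "own \<noteq> riv"
    using own by (auto simp: riv_def less_2_cases_iff)
  have "0 \<le> a * e"
    using \<open>0 < a\<close> \<open>0 \<le> e\<close> by simp
  then have "t < a*(1 - 2*t)"
    using ineqs(2) \<open>0 \<le> e\<close> by (simp add: algebra_simps)
  note profile_simps = mem_agent_bundle val_agent_bundle sum_lessThan_4 adversary_profile_def
    owner_val_def rival_val_def vec4_def algebra_simps
  note setting = own alloc(1,2)[folded riv_def] \<open>0 < a\<close> ineqs riv \<open>t < a*(1 - 2*t)\<close>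
  from alloc(3,4) own consider "alloc 2 = own" "alloc 3 = own" | "alloc 2 = own" "alloc 3 = riv"
    | "alloc 2 = riv" "alloc 3 = own" | "alloc 2 = riv" "alloc 3 = riv"
    unfolding riv_def by linarith
  then show ?thesis
  proof cases
    case 1
    show ?thesis by (rule not_a_EFX_if_envy[where i = riv and j = own and g = 0])
        (use setting 1 in \<open>simp_all add: profile_simps\<close>)
  next
    case 2
    show ?thesis by (rule not_a_EFX_if_envy[where i = riv and j = own and g = 0])
        (use setting 2 in \<open>simp_all add: profile_simps\<close>)
  next
    case 3
    show ?thesis by (rule not_a_EFX_if_envy[where i = own and j = riv and g = 1])
        (use setting 3 in \<open>simp_all add: profile_simps\<close>)
  next
    case 4
    show ?thesis by (rule not_a_EFX_if_envy[where i = own and j = riv and g = 1])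
        (use setting 4 in \<open>simp_all add: profile_simps\<close>)
  qed
qed

lemma adversary_instance_admissible:
  assumes "0 \<le> e" and "e \<le> t" and "3*t + 2*e \<le> 1"
  shows "normalized_val 4 (adversary_prediction t e)"
    and "normalized_val 4 (adversary_profile t e own s i)"
    and "pred_error 4 (adversary_prediction t e) (adversary_profile t e own s i) = e"
  using assms
  by (auto simp: adversary_prediction_def adversary_profile_def owner_val_def rival_val_def
      normalized_val_vec4 pred_error_vec4)

lemma online_alg_not_a_EFX:
  fixes a d :: real
  assumes online: "online_alg 2 4 alg"
    and "1/2 < a" and "a \<le> 1" and "(1 - a) / (2 + 3*a) < d"
  shows "\<exists>p v. (\<forall>i<2. normalized_val 4 (p i) \<and> normalized_val 4 (v i)
                    \<and> k_value 4 4 (p i) \<and> k_value 4 4 (v i) \<and> pred_error 4 (p i) (v i) \<le> d)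
               \<and> \<not> a_EFX a 2 4 v (alg p v)"
proof -
  obtain t e where te: "0 < e" "e \<le> d" "e \<le> t" "3*t + 2*e \<le> 1"
    and h: "2*t < a*(1 - 3*t)" "1 - 3*t - 2*e < 2*a*(t + e)" "t + e < a*(1 - 2*t - e)"
    using adversary_parameters assms(2-4) by blast
  define p where "p = (\<lambda>i::nat. adversary_prediction t e)"
  obtain own s where own: "own < 2" and alloc: "alg p (adversary_profile t e own s) 0 = own"
    "alg p (adversary_profile t e own s) 1 = (if s then own else 1 - own)"
    using online_alg_against_adversary[OF online] by blast
  have range: "alg p (adversary_profile t e own s) k < 2" if "k < 4" for k
    using online that unfolding online_alg_def by blast
  have "\<not> a_EFX a 2 4 (adversary_profile t e own s) (alg p (adversary_profile t e own s))"
  proof (cases s)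
    case True
    have "\<not> a_EFX a 2 4 (adversary_profile t e own True) (alg p (adversary_profile t e own s))"
      using True own alloc te h \<open>1/2 < a\<close> range
      by (intro adversary_profile_not_a_EFX_owner_gets_good1) simp_all
    with True show ?thesis by simp
  next
    case False
    have "\<not> a_EFX a 2 4 (adversary_profile t e own False) (alg p (adversary_profile t e own s))"
      using False own alloc te h \<open>1/2 < a\<close> range
      by (intro adversary_profile_not_a_EFX_rival_gets_good1) simp_all
    with False show ?thesis by simp
  qed
  moreover have "\<forall>i<2. normalized_val 4 (p i) \<and> normalized_val 4 (adversary_profile t e own s i)
      \<and> k_value 4 4 (p i) \<and> k_value 4 4 (adversary_profile t e own s i)
      \<and> pred_error 4 (p i) (adversary_profile t e own s i) \<le> d"
    using te by (simp add: p_def adversary_instance_admissible k_value_of_le)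
  ultimately show ?thesis
    by blast
qed

theorem theorem4p5:
  fixes a \<eta> :: real
  assumes "1/2 < a" and "a \<le> 1"
    and "\<eta> < 1 - (1 - a) / min (6 * a) 4"
  shows "\<not> (\<exists>alg. online_alg 2 4 alg \<and>
           (\<forall>p v. (\<forall>i<2. normalized_val 4 (p i) \<and> normalized_val 4 (v i)
                        \<and> k_value 4 4 (p i) \<and> k_value 4 4 (v i)
                        \<and> pred_error 4 (p i) (v i) \<le> 1 - \<eta>)
                   \<longrightarrow> a_EFX a 2 4 v (alg p v)))"
proof -
  have "(1 - a) / (2 + 3*a) \<le> (1 - a) / min (6 * a) 4"
    using assms(1,2) by (intro divide_left_mono) (auto simp: min_def)
  then have "(1 - a) / (2 + 3*a) < 1 - \<eta>"
    using assms(3) by linarith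
  then show ?thesis
    using online_alg_not_a_EFX assms(1,2) by blast
qed

end
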